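(* Assume the Green's functions $G_P[2T]$, $G_N[T]$, $G_D[T]$ exist. 1. If $G_P[2T]\ge0$ on $J\times J$, then $G_N[T](t,s)\ge|G_D[T](t,s)|$ for all $(t,s)\in I\times I$. 2. If $G_P[2T]\le0$ on $J\times J$, then $G_N[T](t,s)\le-|G_D[T](t,s)|$ for all $(t,s)\in I\times I$.
   Context: Fix $n\ge 1$, $T>0$, $I=[0,T]$, $J=[0,2T]$. $W^{2n,1}(K)$: $u\in C^{2n-1}(K)$ with $u^{(2n-1)}$ absolutely continuous. Let $a_0,\dots,a_{2n-1}\in L^\alpha(I)$, $\alpha\ge1$, $Lu=u^{(2n)}+\sum_{k=0}^{2n-1}a_ku^{(k)}$ on $I$. $\widetilde L u=u^{(2n)}+\sum_{k=0}^{n-1}(\hat a_{2k+1}u^{(2k+1)}+\tilde a_{2k}u^{(2k)})$ on $J$, where $\tilde a_{2k}=a_{2k}$, $\hat a_{2k+1}=a_{2k+1}$ on $I$, and $\tilde a_{2k}(t)=a_{2k}(2T-t)$, $\hat a_{2k+1}(t)=-a_{2k+1}(2T-t)$ for $t\in(T,2T]$. An operator $M$ is nonresonant in $X$ if $Mu=0$ a.e., $u\in X$ forces $u\equiv0$; its Green's function $G$ then gives the unique solution $u(t)=\int G(t,s)\sigma(s)ds$ of $Mu=\sigma$, $u\in X$. $G_N[T]$, $G_D[T]$: Green's functions of $L$ on $\{u\in W^{2n,1}(I): u^{(2k+1)}(0)=u^{(2k+1)}(T)=0,\ k=0,\dots,n-1\}$ and $\{u\in W^{2n,1}(I): u^{(2k)}(0)=u^{(2k)}(T)=0,\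 k=0,\dots,n-1\}$. $G_P[2T]$: Green's function of $\widetilde L$ on $\{u\in W^{2n,1}(J): u^{(k)}(0)=u^{(k)}(2T),\ k=0,\dots,2n-1\}$. *)

theory Defs
  imports "HOL-Analysis.Analysis"
begin

text \<open>A function u belongs to W^{2n,1}([a,b]) with derivative family D
  (D 0 = u, D k = u^(k)) when D k has derivative D (k+1) (one-sided at endpoints) for
  k < 2n-1, and D (2n-1) is absolutely continuous, i.e. it is the indefinite Lebesgue integral
  of the integrable function D (2n), which is then u^(2n) almost everywhere.\<close>

definition W2n1 :: "nat \<Rightarrow> real \<Rightarrow> real \<Rightarrow> (nat \<Rightarrow> real \<Rightarrow> real) \<Rightarrow> bool" where
  "W2n1 n a b D \<longleftrightarrow>
     (\<forall>k < 2*n - 1. \<forall>t\<in>{a..b}. (D k has_real_derivative D (Suc k) t) (at t within {a..b})) \<and>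
     integrable (lebesgue_on {a..b}) (D (2*n)) \<and>
     (\<forall>t\<in>{a..b}. D (2*n - 1) t = D (2*n - 1) a + integral\<^sup>L (lebesgue_on {a..t}) (D (2*n)))"

definition Lp_on :: "real \<Rightarrow> real \<Rightarrow> real \<Rightarrow> (real \<Rightarrow> real) \<Rightarrow> bool" where
  "Lp_on p a b f \<longleftrightarrow> f \<in> borel_measurable (lebesgue_on {a..b}) \<and>
     integrable (lebesgue_on {a..b}) (\<lambda>t. \<bar>f t\<bar> powr p)"

definition solves :: "nat \<Rightarrow> real \<Rightarrow> real \<Rightarrow> (nat \<Rightarrow> real \<Rightarrow> real) \<Rightarrow>
    ((nat \<Rightarrow> real \<Rightarrow> real) \<Rightarrow> bool) \<Rightarrow> (real \<Rightarrow> real) \<Rightarrow> (real \<Rightarrow> real) \<Rightarrow> bool" where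
  "solves n a b c BC u \<sigma> \<longleftrightarrow>
     (\<exists>D. (\<forall>t\<in>{a..b}. D 0 t = u t) \<and> W2n1 n a b D \<and> BC D \<and>
        (AE t in lebesgue_on {a..b}. D (2*n) t + (\<Sum>k<2*n. c k t * D k t) = \<sigma> t))"

definition nonresonant :: "nat \<Rightarrow> real \<Rightarrow> real \<Rightarrow> (nat \<Rightarrow> real \<Rightarrow> real) \<Rightarrow>
    ((nat \<Rightarrow> real \<Rightarrow> real) \<Rightarrow> bool) \<Rightarrow> bool" where
  "nonresonant n a b c BC \<longleftrightarrow>
     (\<forall>u. solves n a b c BC u (\<lambda>_. 0) \<longrightarrow> (\<forall>t\<in>{a..b}. u t = 0))"

text \<open>G is the Green's function of M on X: M is nonresonant in X, G is continuous on the
  square (as Green's functions of problems of order 2n >= 2 are), and for every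
  sigma in L^1 the function t \<mapsto> \<integral> G(t,s) sigma(s) ds solves M u = sigma, u \<in> X.\<close>
definition green :: "nat \<Rightarrow> real \<Rightarrow> real \<Rightarrow> (nat \<Rightarrow> real \<Rightarrow> real) \<Rightarrow>
    ((nat \<Rightarrow> real \<Rightarrow> real) \<Rightarrow> bool) \<Rightarrow> (real \<Rightarrow> real \<Rightarrow> real) \<Rightarrow> bool" where
  "green n a b c BC G \<longleftrightarrow>
     nonresonant n a b c BC \<and>
     continuous_on ({a..b} \<times> {a..b}) (\<lambda>(t, s). G t s) \<and>
     (\<forall>\<sigma>. integrable (lebesgue_on {a..b}) \<sigma> \<longrightarrow>
        solves n a b c BC (\<lambda>t. integral\<^sup>L (lebesgue_on {a..b}) (\<lambda>s. G t s * \<sigma> s)) \<sigma>)"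

definition BC_N :: "nat \<Rightarrow> real \<Rightarrow> (nat \<Rightarrow> real \<Rightarrow> real) \<Rightarrow> bool" where
  "BC_N n T D \<longleftrightarrow> (\<forall>k<n. D (2*k+1) 0 = 0 \<and> D (2*k+1) T = 0)"

definition BC_D :: "nat \<Rightarrow> real \<Rightarrow> (nat \<Rightarrow> real \<Rightarrow> real) \<Rightarrow> bool" where
  "BC_D n T D \<longleftrightarrow> (\<forall>k<n. D (2*k) 0 = 0 \<and> D (2*k) T = 0)"

definition BC_P :: "nat \<Rightarrow> real \<Rightarrow> (nat \<Rightarrow> real \<Rightarrow> real) \<Rightarrow> bool" where
  "BC_P n T D \<longleftrightarrow> (\<forall>k<2*n. D k 0 = D k T)"

definition ext_coef :: "real \<Rightarrow> (nat \<Rightarrow> real \<Rightarrow> real) \<Rightarrow> nat \<Rightarrow> real \<Rightarrow> real" where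
  "ext_coef T a k t = (if t \<le> T then a k t
                       else if even k then a k (2*T - t) else - a k (2*T - t))"

end

theory Submission
  imports Defs
begin

text \<open>If u solves the periodic problem for the extended operator on [0,2T] with the
  forcing term extended evenly (\<epsilon> = 1) or oddly (\<epsilon> = -1) about T, then
  t \<mapsto> \<epsilon> u(2T - t) solves the same problem, because the extended operator commutes
  with the reflection up to the signs (-1)^k on u^(k). Nonresonance forces u to be
  \<epsilon>-symmetric, so the derivatives u^(k) with \<epsilon>(-1)^k = -1 vanish at 0 and T and the
  restriction of u to [0,T] solves the Neumann (\<epsilon> = 1) or Dirichlet (\<epsilon> = -1) problem.
  Comparing integral representations yields
  G_N(t,s) = G_P(t,s) + G_P(t,2T-s) and G_D(t,s) = G_P(t,s) - G_P(t,2T-s),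
  from which both sign statements are immediate.\<close>

lemma integrable_lebesgue_on_iff_absolutely_integrable:
  fixes f :: "real \<Rightarrow> real"
  assumes "S \<in> sets lebesgue"
  shows "integrable (lebesgue_on S) f \<longleftrightarrow> f absolutely_integrable_on S"
  using assms by (simp add: set_integrable_def integrable_restrict_space)

lemma has_bochner_integral_lebesgue_on_reflect:
  fixes f :: "real \<Rightarrow> real"
  assumes "has_bochner_integral (lebesgue_on {a..b}) f i"
  shows "has_bochner_integral (lebesgue_on {r-b..r-a}) (\<lambda>x. f (r - x)) i"
proof -
  have "has_bochner_integral lebesgue (\<lambda>x. indicator {a..b} x *\<^sub>R f x) i"
    using assms by (simp add: has_bochner_integral_restrict_space)
  then have "has_bochner_integral lebesgue (\<lambda>x. indicat_real {a..b} (r - x) * f (r - x)) i"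
    using has_bochner_integral_lebesgue_real_affine_iff[of "-1" "\<lambda>x. indicator {a..b} x *\<^sub>R f x" i r]
    by auto
  moreover have "(\<lambda>x. indicat_real {a..b} (r - x) * f (r - x)) =
      (\<lambda>x. indicat_real {r-b..r-a} x * f (r - x))"
    by (auto simp: indicator_def fun_eq_iff)
  ultimately show ?thesis
    by (simp add: has_bochner_integral_restrict_space)
qed

lemma integrable_lebesgue_on_reflect:
  fixes f :: "real \<Rightarrow> real"
  assumes "integrable (lebesgue_on {a..b}) f"
  shows "integrable (lebesgue_on {r-b..r-a}) (\<lambda>x. f (r - x))"
  using assms has_bochner_integral_lebesgue_on_reflect by (metis has_bochner_integral_iff)

lemma integral_lebesgue_on_reflect:
  fixes f :: "real \<Rightarrow> real"
  shows "integral\<^sup>L (lebesgue_on {r-b..r-a}) (\<lambda>x. f (r - x)) = integral\<^sup>L (lebesgue_on {a..b}) f"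
proof (cases "integrable (lebesgue_on {a..b}) f")
  case True
  then show ?thesis
    using has_bochner_integral_lebesgue_on_reflect by (metis has_bochner_integral_iff)
next
  case False
  then have "\<not> integrable (lebesgue_on {r-b..r-a}) (\<lambda>x. f (r - x))"
    using integrable_lebesgue_on_reflect[where f="\<lambda>x. f (r - x)" and a="r-b" and b="r-a" and r=r]
    by auto
  with False show ?thesis
    by (simp add: not_integrable_integral_eq)
qed

lemma integrable_lebesgue_on_spike_point:
  fixes f g :: "real \<Rightarrow> real"
  assumes f: "integrable (lebesgue_on {a..b}) f"
    and eq: "\<And>x. x \<in> {a..b} \<Longrightarrow> x \<noteq> c \<Longrightarrow> g x = f x"
  shows "integrable (lebesgue_on {a..b}) g"
    and "integral\<^sup>L (lebesgue_on {a..b}) g = integral\<^sup>L (lebesgue_on {a..b}) f"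
proof -
  have S: "{a..b} \<in> sets lebesgue" by simp
  have eq': "\<And>x. x \<in> {a..b} - {c} \<Longrightarrow> g x = f x" using eq by blast
  have "f absolutely_integrable_on {a..b}"
    using f integrable_lebesgue_on_iff_absolutely_integrable[OF S] by blast
  then have "g absolutely_integrable_on {a..b}"
    by (rule absolutely_integrable_spike[where S="{c}"]) (use eq' in auto)
  then show g: "integrable (lebesgue_on {a..b}) g"
    using integrable_lebesgue_on_iff_absolutely_integrable[OF S] by blast
  have "integral {a..b} g = integral {a..b} f"
    by (rule integral_spike[where S="{c}", symmetric]) (use eq' in auto)
  then show "integral\<^sup>L (lebesgue_on {a..b}) g = integral\<^sup>L (lebesgue_on {a..b}) f"
    using lebesgue_integral_eq_integral[OF g S] lebesgue_integral_eq_integral[OF f S] by simp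
qed

lemma integrable_continuous_mult:
  fixes g \<sigma> :: "real \<Rightarrow> real"
  assumes g: "continuous_on {a..b} g" and \<sigma>: "integrable (lebesgue_on {a..b}) \<sigma>"
  shows "integrable (lebesgue_on {a..b}) (\<lambda>x. g x * \<sigma> x)"
proof -
  have S: "{a..b} \<in> sets lebesgue" by simp
  have "g \<in> borel_measurable (lebesgue_on {a..b})"
    by (rule continuous_imp_measurable_on_sets_lebesgue[OF g S])
  moreover have "bounded (g ` {a..b})"
    by (intro compact_imp_bounded compact_continuous_image[OF g]) simp
  moreover have "\<sigma> absolutely_integrable_on {a..b}"
    using \<sigma> integrable_lebesgue_on_iff_absolutely_integrable[OF S] by blast
  ultimately have "(\<lambda>x. g x * \<sigma> x) absolutely_integrable_on {a..b}"
    using absolutely_integrable_bounded_measurable_product_real[OF _ S] by blast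
  then show ?thesis
    using integrable_lebesgue_on_iff_absolutely_integrable[OF S] by blast
qed

text \<open>Testing against h = g_1 - g_2 itself gives \<integral> h^2 = 0.\<close>

lemma continuous_eq_if_integrals_eq:
  fixes g\<^sub>1 g\<^sub>2 :: "real \<Rightarrow> real"
  assumes "a < b" and g\<^sub>1: "continuous_on {a..b} g\<^sub>1" and g\<^sub>2: "continuous_on {a..b} g\<^sub>2"
    and eq: "\<And>\<sigma>. integrable (lebesgue_on {a..b}) \<sigma> \<Longrightarrow>
       integral\<^sup>L (lebesgue_on {a..b}) (\<lambda>s. g\<^sub>1 s * \<sigma> s) =
       integral\<^sup>L (lebesgue_on {a..b}) (\<lambda>s. g\<^sub>2 s * \<sigma> s)"
    and x: "x \<in> {a..b}"
  shows "g\<^sub>1 x = g\<^sub>2 x"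
proof -
  define h where "h s = g\<^sub>1 s - g\<^sub>2 s" for s
  have S: "{a..b} \<in> sets lebesgue" by simp
  have h: "continuous_on {a..b} h"
    unfolding h_def using g\<^sub>1 g\<^sub>2 by (intro continuous_intros)
  then have ih: "integrable (lebesgue_on {a..b}) h"
    using absolutely_integrable_continuous_real integrable_lebesgue_on_iff_absolutely_integrable[OF S]
    by blast
  have "integral\<^sup>L (lebesgue_on {a..b}) (\<lambda>s. h s * h s) =
        integral\<^sup>L (lebesgue_on {a..b}) (\<lambda>s. g\<^sub>1 s * h s - g\<^sub>2 s * h s)"
    by (intro Bochner_Integration.integral_cong) (simp_all add: h_def algebra_simps)
  also have "\<dots> = 0"
    using Bochner_Integration.integral_diff[OF integrable_continuous_mult[OF g\<^sub>1 ih]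
        integrable_continuous_mult[OF g\<^sub>2 ih]] eq[OF ih]
    by simp
  finally have "((\<lambda>s. h s * h s) has_integral 0) (cbox a b)"
    using has_integral_integral_lebesgue_on[OF integrable_continuous_mult[OF h ih] S] by simp
  moreover have "continuous_on (cbox a b) (\<lambda>s. h s * h s)"
    using h by (auto intro: continuous_intros)
  ultimately have "h x * h x = 0"
    using has_integral_0_cbox_imp_0[of a b "\<lambda>s. h s * h s" x] \<open>a < b\<close> x by simp
  then show ?thesis
    unfolding h_def by simp
qed

lemma AE_lebesgue_on_iff_negligible:
  assumes "S \<in> sets lebesgue"
  shows "(AE x in lebesgue_on S. P x) \<longleftrightarrow> (\<exists>N. negligible N \<and> {x\<in>S. \<not> P x} \<subseteq> N)"
proof
  assume "AE x in lebesgue_on S. P x"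
  then obtain N where "N \<in> null_sets (lebesgue_on S)" "{x \<in> S. \<not> P x} \<subseteq> N"
    by (auto simp: eventually_ae_filter space_restrict_space)
  then show "\<exists>N. negligible N \<and> {x\<in>S. \<not> P x} \<subseteq> N"
    using assms by (auto simp: null_sets_restrict_space negligible_iff_null_sets)
next
  assume "\<exists>N. negligible N \<and> {x\<in>S. \<not> P x} \<subseteq> N"
  then obtain N where N: "negligible N" "{x\<in>S. \<not> P x} \<subseteq> N" by blast
  then have "N \<inter> S \<in> null_sets (lebesgue_on S)"
    using assms negligible_subset[of N "N \<inter> S"]
    by (auto simp: null_sets_restrict_space negligible_iff_null_sets)
  moreover have "{x \<in> space (lebesgue_on S). \<not> P x} \<subseteq> N \<inter> S"
    using N(2) by (auto simp: space_restrict_space)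
  ultimately show "AE x in lebesgue_on S. P x"
    unfolding eventually_ae_filter by blast
qed

lemma AE_lebesgue_on_reflect:
  fixes r :: real
  assumes "AE x in lebesgue_on {a..b}. P x"
  shows "AE x in lebesgue_on {r-b..r-a}. P (r - x)"
proof -
  obtain N where N: "negligible N" "{x\<in>{a..b}. \<not> P x} \<subseteq> N"
    using assms AE_lebesgue_on_iff_negligible[of "{a..b}" P] by auto
  have "(\<lambda>x. r - x) differentiable_on N"
    by (intro derivative_intros)
  then have "negligible ((\<lambda>x. r - x) ` N)"
    using N(1) by (intro negligible_differentiable_image_negligible) auto
  moreover have "{x\<in>{r-b..r-a}. \<not> P (r - x)} \<subseteq> (\<lambda>x. r - x) ` N"
  proof
    fix x assume "x \<in> {x\<in>{r-b..r-a}. \<not> P (r - x)}"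
    then have "r - x \<in> N" using N(2) by auto
    then show "x \<in> (\<lambda>x. r - x) ` N" by (rule image_eqI[rotated]) simp
  qed
  ultimately show ?thesis
    using AE_lebesgue_on_iff_negligible[of "{r-b..r-a}" "\<lambda>x. P (r - x)"] by auto
qed

lemma AE_lebesgue_on_subinterval:
  assumes "AE x in lebesgue_on {a..b}. P x" "{c..d} \<subseteq> {a..b::real}"
  shows "AE x in lebesgue_on {c..d}. P x"
proof -
  obtain N where "negligible N" "{x\<in>{a..b}. \<not> P x} \<subseteq> N"
    using assms(1) AE_lebesgue_on_iff_negligible[of "{a..b}" P] by auto
  moreover have "{x\<in>{c..d}. \<not> P x} \<subseteq> {x\<in>{a..b}. \<not> P x}"
    using assms(2) by blast
  moreover have "{c..d} \<in> sets lebesgue" by simp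
  ultimately show ?thesis
    using AE_lebesgue_on_iff_negligible[of "{c..d}" P] by (meson order_trans)
qed

lemma AE_lebesgue_on_neq: "AE x in lebesgue_on {a..b::real}. x \<noteq> c"
proof -
  have "negligible {c}" "{x\<in>{a..b}. \<not> x \<noteq> c} \<subseteq> {c}" by auto
  then show ?thesis
    using AE_lebesgue_on_iff_negligible[of "{a..b}" "\<lambda>x. x \<noteq> c"] by auto
qed

lemma W2n1_diff:
  assumes "W2n1 n a b D" "W2n1 n a b E"
  shows "W2n1 n a b (\<lambda>k t. D k t - E k t)"
proof -
  note D = assms(1)[unfolded W2n1_def] and E = assms(2)[unfolded W2n1_def]
  have "((\<lambda>t. D k t - E k t) has_real_derivative D (Suc k) t - E (Suc k) t) (at t within {a..b})"
    if "k < 2*n - 1" "t \<in> {a..b}" for k t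
    using D[THEN conjunct1, rule_format, OF that] E[THEN conjunct1, rule_format, OF that]
    by (rule DERIV_diff)
  moreover have "integrable (lebesgue_on {a..b}) (\<lambda>t. D (2*n) t - E (2*n) t)"
    using D E by simp
  moreover have "D (2*n - 1) t - E (2*n - 1) t = D (2*n - 1) a - E (2*n - 1) a +
      integral\<^sup>L (lebesgue_on {a..t}) (\<lambda>t. D (2*n) t - E (2*n) t)" if t: "t \<in> {a..b}" for t
  proof -
    have sub: "{a..t} \<subseteq> {a..b}" using t by auto
    have "integrable (lebesgue_on {a..t}) (D (2*n))" "integrable (lebesgue_on {a..t}) (E (2*n))"
      using D E by (simp_all add: integrable_subinterval[OF _ sub])
    then have "integral\<^sup>L (lebesgue_on {a..t}) (\<lambda>t. D (2*n) t - E (2*n) t) =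
        integral\<^sup>L (lebesgue_on {a..t}) (D (2*n)) - integral\<^sup>L (lebesgue_on {a..t}) (E (2*n))"
      by (rule Bochner_Integration.integral_diff)
    then show ?thesis
      using D[THEN conjunct2, THEN conjunct2, rule_format, OF t]
        E[THEN conjunct2, THEN conjunct2, rule_format, OF t]
      by simp
  qed
  ultimately show ?thesis
    unfolding W2n1_def by blast
qed

lemma W2n1_subinterval:
  assumes "W2n1 n a b D" and "c \<le> b"
  shows "W2n1 n a c D"
proof -
  note D = assms(1)[unfolded W2n1_def]
  have sub: "{a..c} \<subseteq> {a..b}" using \<open>c \<le> b\<close> by auto
  have "(D k has_real_derivative D (Suc k) t) (at t within {a..c})"
    if "k < 2*n - 1" "t \<in> {a..c}" for k t
    using that sub by (intro has_field_derivative_subset[OF D[THEN conjunct1, rule_format] sub]) auto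
  moreover have "integrable (lebesgue_on {a..c}) (D (2*n))"
    using D[THEN conjunct2, THEN conjunct1] by (rule integrable_subinterval[OF _ sub])
  moreover have "D (2*n - 1) t = D (2*n - 1) a + integral\<^sup>L (lebesgue_on {a..t}) (D (2*n))"
    if "t \<in> {a..c}" for t
    using D[THEN conjunct2, THEN conjunct2, rule_format, OF subsetD[OF sub that]] .
  ultimately show ?thesis
    unfolding W2n1_def by blast
qed

text \<open>The sign (-1)^k compensates the factor -1 from each differentiation of t \<mapsto> r - t;
  the odd order 2n - 1 of the absolutely continuous derivative needs n \<ge> 1.\<close>

lemma W2n1_reflect:
  assumes "W2n1 n 0 r D" and "n \<ge> 1" "0 \<le> r"
  shows "W2n1 n 0 r (\<lambda>k t. c * (-1)^k * D k (r - t))"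
proof -
  note D = assms(1)[unfolded W2n1_def]
  have "((\<lambda>t. c * (-1)^k * D k (r - t)) has_real_derivative
      c * (-1)^(Suc k) * D (Suc k) (r - t)) (at t within {0..r})"
    if k: "k < 2*n - 1" and t: "t \<in> {0..r}" for k t
  proof -
    have "(\<lambda>t. r - t) ` {0..r} = {0..r}" "r - t \<in> {0..r}"
      using t by auto
    then have "(D k has_real_derivative D (Suc k) (r - t)) (at (r - t) within (\<lambda>t. r - t) ` {0..r})"
      using D[THEN conjunct1, rule_format, OF k] by simp
    then have "(D k \<circ> (\<lambda>t. r - t) has_real_derivative D (Suc k) (r - t) * (0 - 1)) (at t within {0..r})"
      by (rule DERIV_image_chain) (rule DERIV_diff[OF DERIV_const DERIV_ident])
    then have "((\<lambda>t. c * (-1)^k * D k (r - t)) has_real_derivative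
        c * (-1)^k * (D (Suc k) (r - t) * (0 - 1))) (at t within {0..r})"
      unfolding o_def by (rule DERIV_cmult)
    then show ?thesis
      by (rule DERIV_cong) simp
  qed
  moreover have "integrable (lebesgue_on {0..r}) (\<lambda>t. c * (-1)^(2*n) * D (2*n) (r - t))"
    using integrable_lebesgue_on_reflect[OF D[THEN conjunct2, THEN conjunct1], of r] by simp
  moreover have "c * (-1)^(2*n - 1) * D (2*n - 1) (r - t) = c * (-1)^(2*n - 1) * D (2*n - 1) (r - 0) +
      integral\<^sup>L (lebesgue_on {0..t}) (\<lambda>t. c * (-1)^(2*n) * D (2*n) (r - t))"
    if t: "t \<in> {0..r}" for t
  proof -
    have odd_sign: "(-1::real)^(2*n - 1) = -1"
      using \<open>n \<ge> 1\<close> by (simp add: power_minus_odd)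
    have "r - t \<in> {0..r}" "r \<in> {0..r}" using t by auto
    note fundamental = D[THEN conjunct2, THEN conjunct2, rule_format, OF this(1)]
      D[THEN conjunct2, THEN conjunct2, rule_format, OF this(2)]
    have "integral\<^sup>L (lebesgue_on {0..r}) (D (2*n)) =
        integral\<^sup>L (lebesgue_on {0..r-t}) (D (2*n)) + integral\<^sup>L (lebesgue_on {r-t..r}) (D (2*n))"
      using t by (intro integral_combine[OF D[THEN conjunct2, THEN conjunct1]]) auto
    moreover have "integral\<^sup>L (lebesgue_on {0..t}) (\<lambda>x. D (2*n) (r - x)) =
        integral\<^sup>L (lebesgue_on {r-t..r}) (D (2*n))"
      using integral_lebesgue_on_reflect[of r r "r - t" "D (2*n)"] by simp
    ultimately show ?thesis
      using fundamental unfolding odd_sign by (simp add: algebra_simps)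
  qed
  ultimately show ?thesis
    unfolding W2n1_def by blast
qed

lemma W2n1_derivatives_unique:
  assumes "a < b" and "W2n1 n a b D" "W2n1 n a b E"
    and eq0: "\<forall>t\<in>{a..b}. D 0 t = E 0 t" and "k \<le> 2*n - 1" and "t \<in> {a..b}"
  shows "D k t = E k t"
  using \<open>k \<le> 2*n - 1\<close> \<open>t \<in> {a..b}\<close>
proof (induction k arbitrary: t)
  case 0
  then show ?case using eq0 by blast
next
  case (Suc k)
  then have k: "k < 2*n - 1" by simp
  note dD = assms(2)[unfolded W2n1_def, THEN conjunct1, rule_format, OF k Suc.prems(2)]
  note dE = assms(3)[unfolded W2n1_def, THEN conjunct1, rule_format, OF k Suc.prems(2)]
  have "(E k has_real_derivative D (Suc k) t) (at t within {a..b})"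
    using Suc k by (intro has_field_derivative_transform_within[OF dD zero_less_one]) auto
  with dE show ?case
    using vector_derivative_unique_within_closed_interval[of a b t "E k"] \<open>a < b\<close> Suc.prems(2)
    by (simp add: has_real_derivative_iff_has_vector_derivative)
qed

lemma solves_unique:
  assumes nr: "nonresonant n a b c BC"
    and BC_diff: "\<And>D E. BC D \<Longrightarrow> BC E \<Longrightarrow> BC (\<lambda>k t. D k t - E k t)"
    and "solves n a b c BC u \<sigma>" "solves n a b c BC v \<sigma>" and t: "t \<in> {a..b}"
  shows "u t = v t"
proof -
  obtain D where D: "\<forall>t\<in>{a..b}. D 0 t = u t" "W2n1 n a b D" "BC D"
    "AE t in lebesgue_on {a..b}. D (2*n) t + (\<Sum>k<2*n. c k t * D k t) = \<sigma> t"
    using assms(3) unfolding solves_def by blast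
  obtain E where E: "\<forall>t\<in>{a..b}. E 0 t = v t" "W2n1 n a b E" "BC E"
    "AE t in lebesgue_on {a..b}. E (2*n) t + (\<Sum>k<2*n. c k t * E k t) = \<sigma> t"
    using assms(4) unfolding solves_def by blast
  have "solves n a b c BC (\<lambda>t. u t - v t) (\<lambda>_. 0)"
    unfolding solves_def
  proof (intro exI[of _ "\<lambda>k t. D k t - E k t"] conjI)
    show "AE t in lebesgue_on {a..b}. D (2*n) t - E (2*n) t + (\<Sum>k<2*n. c k t * (D k t - E k t)) = 0"
      using D(4) E(4) by eventually_elim (simp add: right_diff_distrib sum_subtractf)
  qed (use D E W2n1_diff BC_diff in auto)
  then show ?thesis
    using nr t unfolding nonresonant_def by auto
qed

lemma continuous_on_slice_compose:
  assumes "continuous_on (A \<times> B) (\<lambda>(t, s). G t s)" "t \<in> A"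
    and "continuous_on S h" "h ` S \<subseteq> B"
  shows "continuous_on S (\<lambda>s. G t (h s))"
proof -
  have "continuous_on S (\<lambda>s. (t, h s))"
    using assms(3) by (intro continuous_intros)
  moreover have "(\<lambda>s. (t, h s)) ` S \<subseteq> A \<times> B"
    using assms(2,4) by auto
  ultimately show ?thesis
    using continuous_on_compose2[OF assms(1)] by fastforce
qed

definition reflect_ext :: "real \<Rightarrow> real \<Rightarrow> (real \<Rightarrow> real) \<Rightarrow> real \<Rightarrow> real" where
  "reflect_ext T \<epsilon> \<sigma> t = (if t \<le> T then \<sigma> t else \<epsilon> * \<sigma> (2*T - t))"

lemma ext_coef_reflect:
  assumes "t \<noteq> T"
  shows "ext_coef T a k t * (-1)^k = ext_coef T a k (2*T - t)"
  using assms by (cases "t < T"; cases "even k") (auto simp: ext_coef_def)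

lemma sum_ext_coef_reflect:
  assumes "t \<noteq> T"
  shows "(\<Sum>k<m. ext_coef T a k t * (c * (-1)^k * x k)) =
    c * (\<Sum>k<m. ext_coef T a k (2*T - t) * x k)"
  unfolding sum_distrib_left
  using ext_coef_reflect[OF assms, of a] by (intro sum.cong) (simp_all add: ac_simps)

lemma reflect_ext_reflect:
  assumes "\<epsilon> * \<epsilon> = 1" "t \<noteq> T"
  shows "\<epsilon> * reflect_ext T \<epsilon> \<sigma> (2*T - t) = reflect_ext T \<epsilon> \<sigma> t"
  using assms by (cases "t < T") (auto simp: reflect_ext_def mult.assoc[symmetric])

lemma integrable_reflect_ext:
  assumes "0 \<le> T" and \<sigma>: "integrable (lebesgue_on {0..T}) \<sigma>"
  shows "integrable (lebesgue_on {0..2*T}) (reflect_ext T \<epsilon> \<sigma>)"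
proof (rule integrable_combine)
  show "integrable (lebesgue_on {0..T}) (reflect_ext T \<epsilon> \<sigma>)"
    using \<sigma> Bochner_Integration.integrable_cong[OF refl, of "lebesgue_on {0..T}" \<sigma> "reflect_ext T \<epsilon> \<sigma>"]
    by (simp add: reflect_ext_def)
  have "integrable (lebesgue_on {2*T - T..2*T - 0}) (\<lambda>x. \<sigma> (2*T - x))"
    by (rule integrable_lebesgue_on_reflect[OF \<sigma>])
  then have "integrable (lebesgue_on {T..2*T}) (\<lambda>x. \<epsilon> * \<sigma> (2*T - x))"
    by simp
  then show "integrable (lebesgue_on {T..2*T}) (reflect_ext T \<epsilon> \<sigma>)"
    by (rule integrable_lebesgue_on_spike_point(1)[where c=T]) (auto simp: reflect_ext_def)
qed (use assms in auto)

lemma integral_reflect_ext: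
  assumes "0 \<le> T" and g: "continuous_on {0..2*T} g" and \<sigma>: "integrable (lebesgue_on {0..T}) \<sigma>"
  shows "integral\<^sup>L (lebesgue_on {0..2*T}) (\<lambda>s. g s * reflect_ext T \<epsilon> \<sigma> s) =
         integral\<^sup>L (lebesgue_on {0..T}) (\<lambda>s. (g s + \<epsilon> * g (2*T - s)) * \<sigma> s)"
proof -
  have g1: "continuous_on {0..T} g" and g2: "continuous_on {T..2*T} g"
    using g by (auto intro: continuous_on_subset)
  have g3: "continuous_on {0..T} (\<lambda>s. \<epsilon> * g (2*T - s))"
    using g by (auto intro!: continuous_intros intro: continuous_on_compose2[of "{0..2*T}" g])
  have \<sigma>': "integrable (lebesgue_on {T..2*T}) (\<lambda>s. \<epsilon> * \<sigma> (2*T - s))"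
    using integrable_lebesgue_on_reflect[OF \<sigma>, of "2*T"] by simp
  have "integral\<^sup>L (lebesgue_on {0..2*T}) (\<lambda>s. g s * reflect_ext T \<epsilon> \<sigma> s) =
      integral\<^sup>L (lebesgue_on {0..T}) (\<lambda>s. g s * reflect_ext T \<epsilon> \<sigma> s) +
      integral\<^sup>L (lebesgue_on {T..2*T}) (\<lambda>s. g s * reflect_ext T \<epsilon> \<sigma> s)"
    using assms integrable_continuous_mult[OF g integrable_reflect_ext[OF assms(1) \<sigma>]]
    by (intro integral_combine) auto
  also have "integral\<^sup>L (lebesgue_on {0..T}) (\<lambda>s. g s * reflect_ext T \<epsilon> \<sigma> s) =
      integral\<^sup>L (lebesgue_on {0..T}) (\<lambda>s. g s * \<sigma> s)"
    by (rule Bochner_Integration.integral_cong) (auto simp: reflect_ext_def)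
  also have "integral\<^sup>L (lebesgue_on {T..2*T}) (\<lambda>s. g s * reflect_ext T \<epsilon> \<sigma> s) =
      integral\<^sup>L (lebesgue_on {T..2*T}) (\<lambda>s. g s * (\<epsilon> * \<sigma> (2*T - s)))"
    by (rule integrable_lebesgue_on_spike_point(2)[OF integrable_continuous_mult[OF g2 \<sigma>'], where c=T])
      (auto simp: reflect_ext_def)
  also have "\<dots> = integral\<^sup>L (lebesgue_on {0..T}) (\<lambda>s. \<epsilon> * g (2*T - s) * \<sigma> s)"
    using integral_lebesgue_on_reflect[of "2*T" "2*T" T "\<lambda>s. g s * (\<epsilon> * \<sigma> (2*T - s))"]
    by (simp add: ac_simps) metis
  also have "integral\<^sup>L (lebesgue_on {0..T}) (\<lambda>s. g s * \<sigma> s) + \<dots> =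
      integral\<^sup>L (lebesgue_on {0..T}) (\<lambda>s. (g s + \<epsilon> * g (2*T - s)) * \<sigma> s)"
    using integrable_continuous_mult[OF g1 \<sigma>] integrable_continuous_mult[OF g3 \<sigma>]
    by (simp add: distrib_right)
  finally show ?thesis .
qed

lemma solves_periodic_reflect:
  assumes "n \<ge> 1" "0 \<le> T" "\<epsilon> * \<epsilon> = 1"
    and "solves n 0 (2*T) (ext_coef T a) (BC_P n (2*T)) u (reflect_ext T \<epsilon> \<sigma>)"
  shows "solves n 0 (2*T) (ext_coef T a) (BC_P n (2*T)) (\<lambda>t. \<epsilon> * u (2*T - t)) (reflect_ext T \<epsilon> \<sigma>)"
proof -
  obtain D where D0: "\<forall>t\<in>{0..2*T}. D 0 t = u t" and W: "W2n1 n 0 (2*T) D"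
    and BC: "BC_P n (2*T) D"
    and eq: "AE t in lebesgue_on {0..2*T}.
      D (2*n) t + (\<Sum>k<2*n. ext_coef T a k t * D k t) = reflect_ext T \<epsilon> \<sigma> t"
    using assms(4) unfolding solves_def by blast
  define E where "E k t = \<epsilon> * (-1)^k * D k (2*T - t)" for k t
  have "AE t in lebesgue_on {0..2*T}. D (2*n) (2*T - t) +
      (\<Sum>k<2*n. ext_coef T a k (2*T - t) * D k (2*T - t)) = reflect_ext T \<epsilon> \<sigma> (2*T - t)"
    using AE_lebesgue_on_reflect[OF eq, of "2*T"] unfolding diff_self diff_zero .
  then have "AE t in lebesgue_on {0..2*T}.
      E (2*n) t + (\<Sum>k<2*n. ext_coef T a k t * E k t) = reflect_ext T \<epsilon> \<sigma> t"
    using AE_lebesgue_on_neq[where c=T]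
  proof eventually_elim
    case (elim t)
    have "E (2*n) t + (\<Sum>k<2*n. ext_coef T a k t * E k t) =
        \<epsilon> * (D (2*n) (2*T - t) + (\<Sum>k<2*n. ext_coef T a k (2*T - t) * D k (2*T - t)))"
      unfolding E_def sum_ext_coef_reflect[OF \<open>t \<noteq> T\<close>] by (simp add: distrib_left)
    also have "\<dots> = \<epsilon> * reflect_ext T \<epsilon> \<sigma> (2*T - t)"
      using elim by simp
    also have "\<dots> = reflect_ext T \<epsilon> \<sigma> t"
      using reflect_ext_reflect[OF assms(3) \<open>t \<noteq> T\<close>] .
    finally show ?case .
  qed
  moreover have "W2n1 n 0 (2*T) E"
    unfolding E_def using W assms(1,2) by (intro W2n1_reflect) auto
  moreover have "BC_P n (2*T) E"
    using BC by (simp add: BC_P_def E_def)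
  moreover have "\<forall>t\<in>{0..2*T}. E 0 t = \<epsilon> * u (2*T - t)"
    using D0 by (simp add: E_def)
  ultimately show ?thesis
    unfolding solves_def by blast
qed

lemma solves_periodic_symmetric:
  assumes "n \<ge> 1" "0 \<le> T" "\<epsilon> * \<epsilon> = 1"
    and nonres: "nonresonant n 0 (2*T) (ext_coef T a) (BC_P n (2*T))"
    and sol: "solves n 0 (2*T) (ext_coef T a) (BC_P n (2*T)) u (reflect_ext T \<epsilon> \<sigma>)"
    and "t \<in> {0..2*T}"
  shows "u t = \<epsilon> * u (2*T - t)"
  using solves_unique[OF nonres _ sol solves_periodic_reflect[OF assms(1-3) sol] \<open>t \<in> {0..2*T}\<close>]
  by (simp add: BC_P_def)

text \<open>Reflecting an \<epsilon>-symmetric derivative family gives a second family with the same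
  function, hence the same derivatives; at the fixed point T and at the periodically
  identified end points 0 ~ 2T this forces D k = 0 whenever \<epsilon>(-1)^k = -1.\<close>

lemma symmetric_W2n1_boundary_zero:
  assumes "n \<ge> 1" "0 < T" and W: "W2n1 n 0 (2*T) D" and BC: "BC_P n (2*T) D"
    and sym: "\<forall>t\<in>{0..2*T}. D 0 t = \<epsilon> * D 0 (2*T - t)"
    and k: "k < 2*n" and sign: "\<epsilon> * (-1)^k = -1"
  shows "D k 0 = 0" "D k T = 0"
proof -
  define E where "E k t = \<epsilon> * (-1)^k * D k (2*T - t)" for k t
  have WE: "W2n1 n 0 (2*T) E"
    unfolding E_def using W assms(1,2) by (intro W2n1_reflect) auto
  have E0: "\<forall>t\<in>{0..2*T}. D 0 t = E 0 t"
    unfolding E_def power_0 mult_1_right using sym .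
  have antisym: "D k t = - D k (2*T - t)" if "t \<in> {0..2*T}" for t
  proof -
    have "D k t = E k t"
      using W2n1_derivatives_unique[OF _ W WE E0 _ that] k assms(2) by simp
    then show ?thesis
      using sign by (simp add: E_def mult.assoc[symmetric])
  qed
  have "T \<in> {0..2*T}" "0 \<in> {0..2*T}" "2*T - T = T"
    using assms(2) by auto
  then have "D k T = - D k T" "D k 0 = - D k (2*T)"
    using antisym by (metis diff_zero)+
  moreover have "D k (2*T) = D k 0"
    using BC k by (simp add: BC_P_def)
  ultimately show "D k 0 = 0" "D k T = 0"
    by linarith+
qed

lemma solves_restrict_periodic:
  assumes "n \<ge> 1" "0 < T" and GP: "green n 0 (2*T) (ext_coef T a) (BC_P n (2*T)) GP"
    and "\<epsilon> * \<epsilon> = 1" and \<sigma>: "integrable (lebesgue_on {0..T}) \<sigma>"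
    and BCX: "\<And>D. \<forall>k<2*n. \<epsilon> * (-1)^k = -1 \<longrightarrow> D k 0 = 0 \<and> D k T = 0 \<Longrightarrow> BCX D"
  shows "solves n 0 T a BCX
    (\<lambda>t. integral\<^sup>L (lebesgue_on {0..2*T}) (\<lambda>s. GP t s * reflect_ext T \<epsilon> \<sigma> s)) \<sigma>"
proof -
  define u where "u t = integral\<^sup>L (lebesgue_on {0..2*T}) (\<lambda>s. GP t s * reflect_ext T \<epsilon> \<sigma> s)" for t
  have "integrable (lebesgue_on {0..2*T}) (reflect_ext T \<epsilon> \<sigma>)"
    using assms(2) \<sigma> by (intro integrable_reflect_ext) auto
  then have sol: "solves n 0 (2*T) (ext_coef T a) (BC_P n (2*T)) u (reflect_ext T \<epsilon> \<sigma>)"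
    using GP unfolding green_def u_def by blast
  then obtain D where D0: "\<forall>t\<in>{0..2*T}. D 0 t = u t" and W: "W2n1 n 0 (2*T) D"
    and BC: "BC_P n (2*T) D"
    and eq: "AE t in lebesgue_on {0..2*T}.
      D (2*n) t + (\<Sum>k<2*n. ext_coef T a k t * D k t) = reflect_ext T \<epsilon> \<sigma> t"
    unfolding solves_def by blast
  have nonres: "nonresonant n 0 (2*T) (ext_coef T a) (BC_P n (2*T))"
    using GP unfolding green_def by blast
  note usym = solves_periodic_symmetric[OF assms(1) _ assms(4) nonres sol]
  have "\<forall>t\<in>{0..2*T}. D 0 t = \<epsilon> * D 0 (2*T - t)"
  proof
    fix t assume t: "t \<in> {0..2*T}"
    then have "2*T - t \<in> {0..2*T}" by auto
    then show "D 0 t = \<epsilon> * D 0 (2*T - t)"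
      using D0 usym[OF _ t] assms(2) t by simp
  qed
  then have "BCX D"
    using symmetric_W2n1_boundary_zero[OF assms(1,2) W BC] assms(4) by (intro BCX) blast
  moreover have "W2n1 n 0 T D"
    using W2n1_subinterval[OF W] assms(2) by simp
  moreover have "AE t in lebesgue_on {0..T}. D (2*n) t + (\<Sum>k<2*n. a k t * D k t) = \<sigma> t"
  proof -
    have "AE t in lebesgue_on {0..T}.
        D (2*n) t + (\<Sum>k<2*n. ext_coef T a k t * D k t) = reflect_ext T \<epsilon> \<sigma> t"
      using AE_lebesgue_on_subinterval[OF eq, of 0 T] assms(2) by simp
    then show ?thesis
      using AE_space[of "lebesgue_on {0..T}"]
      by eventually_elim (simp add: ext_coef_def reflect_ext_def space_restrict_space)
  qed
  moreover have "\<forall>t\<in>{0..T}. D 0 t = u t"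
    using D0 assms(2) by simp
  ultimately show ?thesis
    unfolding solves_def u_def by blast
qed

lemma green_eq_reflected_periodic:
  assumes "n \<ge> 1" "0 < T" and GP: "green n 0 (2*T) (ext_coef T a) (BC_P n (2*T)) GP"
    and GX: "green n 0 T a BCX GX"
    and BC_diff: "\<And>D E. BCX D \<Longrightarrow> BCX E \<Longrightarrow> BCX (\<lambda>k t. D k t - E k t)"
    and BCX: "\<And>D. \<forall>k<2*n. \<epsilon> * (-1)^k = -1 \<longrightarrow> D k 0 = 0 \<and> D k T = 0 \<Longrightarrow> BCX D"
    and "\<epsilon> * \<epsilon> = 1" and t: "t \<in> {0..T}" and s: "s \<in> {0..T}"
  shows "GX t s = GP t s + \<epsilon> * GP t (2*T - s)"
proof -
  have cP: "continuous_on ({0..2*T} \<times> {0..2*T}) (\<lambda>(t, s). GP t s)"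
    and cX: "continuous_on ({0..T} \<times> {0..T}) (\<lambda>(t, s). GX t s)"
    and nonres: "nonresonant n 0 T a BCX"
    using GP GX unfolding green_def by blast+
  have t2: "t \<in> {0..2*T}" using t \<open>0 < T\<close> by auto
  have cP_t: "continuous_on {0..2*T} (\<lambda>s. GP t s)"
    using continuous_on_slice_compose[OF cP t2 continuous_on_id] by simp
  show ?thesis
  proof (rule continuous_eq_if_integrals_eq[OF \<open>0 < T\<close> _ _ _ s])
    show "continuous_on {0..T} (\<lambda>s. GX t s)"
      using continuous_on_slice_compose[OF cX t continuous_on_id] by simp
    have "continuous_on {0..T} (\<lambda>s. GP t (2*T - s))"
      by (rule continuous_on_slice_compose[OF cP t2]) (auto intro!: continuous_intros)
    then show "continuous_on {0..T} (\<lambda>s. GP t s + \<epsilon> * GP t (2*T - s))"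
      using cP_t \<open>0 < T\<close> by (auto intro!: continuous_intros elim: continuous_on_subset)
  next
    fix \<sigma> :: "real \<Rightarrow> real" assume \<sigma>: "integrable (lebesgue_on {0..T}) \<sigma>"
    have "integral\<^sup>L (lebesgue_on {0..T}) (\<lambda>s. GX t s * \<sigma> s) =
        integral\<^sup>L (lebesgue_on {0..2*T}) (\<lambda>s. GP t s * reflect_ext T \<epsilon> \<sigma> s)"
      using GX \<sigma> unfolding green_def
      by (intro solves_unique[OF nonres BC_diff _ solves_restrict_periodic[OF assms(1,2) GP _ \<sigma> BCX] t])
        (simp_all add: \<open>\<epsilon> * \<epsilon> = 1\<close>)
    also have "\<dots> = integral\<^sup>L (lebesgue_on {0..T}) (\<lambda>s. (GP t s + \<epsilon> * GP t (2*T - s)) * \<sigma> s)"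
      using \<open>0 < T\<close> cP_t \<sigma> by (intro integral_reflect_ext) auto
    finally show "integral\<^sup>L (lebesgue_on {0..T}) (\<lambda>s. GX t s * \<sigma> s) =
        integral\<^sup>L (lebesgue_on {0..T}) (\<lambda>s. (GP t s + \<epsilon> * GP t (2*T - s)) * \<sigma> s)" .
  qed
qed

lemma green_Neumann_eq_periodic:
  assumes "n \<ge> 1" "0 < T" "green n 0 (2*T) (ext_coef T a) (BC_P n (2*T)) GP"
    and "green n 0 T a (BC_N n T) GN" and "t \<in> {0..T}" "s \<in> {0..T}"
  shows "GN t s = GP t s + GP t (2*T - s)"
proof -
  have "BC_N n T D" if "\<forall>k<2*n. 1 * (-1)^k = (-1::real) \<longrightarrow> D k 0 = 0 \<and> D k T = 0" for D
    unfolding BC_N_def using that by simp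
  then show ?thesis
    using green_eq_reflected_periodic[OF assms(1-4), of 1] assms(5,6) by (simp add: BC_N_def)
qed

lemma green_Dirichlet_eq_periodic:
  assumes "n \<ge> 1" "0 < T" "green n 0 (2*T) (ext_coef T a) (BC_P n (2*T)) GP"
    and "green n 0 T a (BC_D n T) GD" and "t \<in> {0..T}" "s \<in> {0..T}"
  shows "GD t s = GP t s - GP t (2*T - s)"
proof -
  have "BC_D n T D" if "\<forall>k<2*n. -1 * (-1)^k = (-1::real) \<longrightarrow> D k 0 = 0 \<and> D k T = 0" for D
    unfolding BC_D_def using that by simp
  then show ?thesis
    using green_eq_reflected_periodic[OF assms(1-4), of "-1"] assms(5,6) by (simp add: BC_D_def)
qed

theorem corollary6p1:
  fixes n :: nat and T \<alpha> :: real and a :: "nat \<Rightarrow> real \<Rightarrow> real"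
    and GP GN GD :: "real \<Rightarrow> real \<Rightarrow> real"
  assumes "n \<ge> 1" and "T > 0" and "\<alpha> \<ge> 1"
    and "\<forall>k<2*n. Lp_on \<alpha> 0 T (a k)"
    and "green n 0 (2*T) (ext_coef T a) (BC_P n (2*T)) GP"
    and "green n 0 T a (BC_N n T) GN"
    and "green n 0 T a (BC_D n T) GD"
  shows "((\<forall>t\<in>{0..2*T}. \<forall>s\<in>{0..2*T}. GP t s \<ge> 0) \<longrightarrow>
            (\<forall>t\<in>{0..T}. \<forall>s\<in>{0..T}. GN t s \<ge> \<bar>GD t s\<bar>)) \<and>
         ((\<forall>t\<in>{0..2*T}. \<forall>s\<in>{0..2*T}. GP t s \<le> 0) \<longrightarrow>
            (\<forall>t\<in>{0..T}. \<forall>s\<in>{0..T}. GN t s \<le> - \<bar>GD t s\<bar>))"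
proof (intro conjI impI ballI)
  fix t s assume t: "t \<in> {0..T}" and s: "s \<in> {0..T}"
  have GN: "GN t s = GP t s + GP t (2*T - s)"
    using green_Neumann_eq_periodic[OF assms(1,2,5,6) t s] .
  have GD: "GD t s = GP t s - GP t (2*T - s)"
    using green_Dirichlet_eq_periodic[OF assms(1,2,5,7) t s] .
  have in_J: "t \<in> {0..2*T}" "s \<in> {0..2*T}" "2*T - s \<in> {0..2*T}"
    using t s \<open>T > 0\<close> by auto
  {
    assume "\<forall>t\<in>{0..2*T}. \<forall>s\<in>{0..2*T}. GP t s \<ge> 0"
    then have "GP t s \<ge> 0" "GP t (2*T - s) \<ge> 0"
      using in_J by blast+
    then show "GN t s \<ge> \<bar>GD t s\<bar>"
      unfolding GN GD by linarith
  next
    assume "\<forall>t\<in>{0..2*T}. \<forall>s\<in>{0..2*T}. GP t s \<le> 0"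
    then have "GP t s \<le> 0" "GP t (2*T - s) \<le> 0"
      using in_J by blast+
    then show "GN t s \<le> - \<bar>GD t s\<bar>"
      unfolding GN GD by linarith
  }qed

end
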